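(* Let $X,Y$ be compact smooth manifolds, $\mu\in\mathcal{P}(X)$, $\nu\in\mathcal{P}(Y)$ normalized volume forms, and $c\in C(X\times Y)$ a continuous cost function satisfying (A1) and (A2) off the closed set $\mathrm{sing}(c)$ where $c$ fails to be smooth. Let $u_0$ be a $c$-convex function and $u^{(k)}_m:=(S^{(k)})^m(u_0)$. For $t\ge0$ let $\mathcal{L}_t$ be the set of all $w\in C(X)$ that are uniform limits of sequences $u^{(k_j)}_{m_j}$ with $k_j\to\infty$ and $m_j/k_j\to t$, and define $u_t(x):=\sup_{w\in\mathcal{L}_t}w(x)$. Then for each $t\ge0$ the function $u_t$ is $c$-convex (in particular continuous), and there is a constant $C$ such that $\sup_{X\times[0,\infty)}|u_t(x)|\le C$.
   Context: (A1): for $(x,y)\notin\mathrm{sing}(c)$ the map $y\mapsto\partial_xc(x,y)$ is injective; (A2): $\det(\partial_{x_i}\partial_{y_j}c)\ne0$ off $\mathrm{sing}(c)$. $c$-transform $u^c(y)=\sup_x(-c(x,y)-u(x))$, $v^c(x)=\sup_y(-c(x,y)-v(y))$; $u$ is $c$-convex if $(u^c)^c=u$. Scaled operators (with $\mu^{(k)}=\mu$, $\nu^{(k)}=\nu$): $v^{(k)}[u](y)=k^{-1}\log\int_Xe^{-kc(x,y)-ku(x)}d\mu(x)$, $S^{(k)}(u)(x)=k^{-1}\log\int_Ye^{-kc(x,y)-kv^{(k)}[u](y)}d\nu(y)$. *)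

theory Defs
  imports "HOL-Analysis.Analysis" "HOL-Probability.Probability"
begin

fun pder :: "'a::euclidean_space list \<Rightarrow> ('a \<Rightarrow> 'b::real_normed_vector) \<Rightarrow> 'a \<Rightarrow> 'b" where
  "pder [] f = f"
| "pder (d # ds) f = (\<lambda>x. vector_derivative (\<lambda>t. pder ds f (x + t *\<^sub>R d)) (at 0))"

definition cinf_on :: "'a::euclidean_space set \<Rightarrow> ('a \<Rightarrow> 'b::real_normed_vector) \<Rightarrow> bool" where
  "cinf_on U f \<longleftrightarrow>
     (\<forall>ds. set ds \<subseteq> Basis \<longrightarrow>
        continuous_on U (pder ds f) \<and>
        (\<forall>d\<in>Basis. \<forall>x\<in>U.
           ((\<lambda>t. pder ds f (x + t *\<^sub>R d)) has_vector_derivative pder (d # ds) f x) (at 0)))"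

text \<open>A local parametrization (inverse chart) of X by an open subset U of real^'n:
 a smooth immersion that is a homeomorphism onto an open subset of X.\<close>
definition chart :: "'a::euclidean_space set \<Rightarrow> (real^'n \<Rightarrow> 'a) \<Rightarrow> (real^'n) set \<Rightarrow> bool" where
  "chart X \<phi> U \<longleftrightarrow> open U \<and> cinf_on U \<phi> \<and>
     (\<forall>a\<in>U. \<forall>v::real^'n. (\<Sum>i\<in>UNIV. v $ i *\<^sub>R pder [axis i 1] \<phi> a) = 0 \<longrightarrow> v = 0) \<and>
     inj_on \<phi> U \<and> \<phi> ` U \<subseteq> X \<and> openin (top_of_set X) (\<phi> ` U) \<and>
     continuous_on (\<phi> ` U) (inv_into U \<phi>)"

text \<open>X is a smooth submanifold of dimension CARD('n) (without boundary).\<close>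
definition smooth_manifold :: "'n::finite itself \<Rightarrow> 'a::euclidean_space set \<Rightarrow> bool" where
  "smooth_manifold _ X \<longleftrightarrow>
     (\<forall>x\<in>X. \<exists>(\<phi>::real^'n \<Rightarrow> 'a) U. chart X \<phi> U \<and> x \<in> \<phi> ` U)"

text \<open>mu is a (smooth, positive) volume form on X: Borel measure on X whose
 pull-back by every chart has a smooth positive density w.r.t. Lebesgue measure.\<close>
definition volume_form :: "'n::finite itself \<Rightarrow> 'a::euclidean_space set \<Rightarrow> 'a measure \<Rightarrow> bool" where
  "volume_form _ X \<mu> \<longleftrightarrow> sets \<mu> = sets (restrict_space borel X) \<and>
     (\<forall>(\<phi>::real^'n \<Rightarrow> 'a) U. chart X \<phi> U \<longrightarrow>
        (\<exists>\<rho>::real^'n \<Rightarrow> real. cinf_on U \<rho> \<and> (\<forall>a\<in>U. \<rho> a > 0) \<and>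
           (\<forall>B\<in>sets lborel. B \<subseteq> U \<longrightarrow>
               emeasure \<mu> (\<phi> ` B) = set_nn_integral lborel B (\<lambda>a. ennreal (\<rho> a)))))"

text \<open>The singular set sing(c): points of X x Y near which c is not smooth
 (smoothness read in charts).\<close>
definition sing :: "'n::finite itself \<Rightarrow> 'a::euclidean_space set \<Rightarrow> 'b::euclidean_space set
     \<Rightarrow> ('a \<times> 'b \<Rightarrow> real) \<Rightarrow> ('a \<times> 'b) set" where
  "sing _ X Y c = {(x, y) \<in> X \<times> Y. \<not> (\<exists>(\<phi>::real^'n \<Rightarrow> 'a) U (\<psi>::real^'n \<Rightarrow> 'b) V a b W.
       chart X \<phi> U \<and> chart Y \<psi> V \<and> a \<in> U \<and> b \<in> V \<and> \<phi> a = x \<and> \<psi> b = y \<and>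
       open W \<and> (a, b) \<in> W \<and> W \<subseteq> U \<times> V \<and>
       cinf_on W (\<lambda>p. c (\<phi> (fst p), \<psi> (snd p))))}"

definition grad_x :: "(real^'n \<Rightarrow> 'a) \<Rightarrow> ('a \<times> 'b \<Rightarrow> real) \<Rightarrow> 'b \<Rightarrow> real^'n \<Rightarrow> real^'n" where
  "grad_x \<phi> c y a = (\<chi> i. pder [axis i 1] (\<lambda>a'. c (\<phi> a', y)) a)"

definition mixed_hess :: "(real^'n \<Rightarrow> 'a) \<Rightarrow> (real^'n \<Rightarrow> 'b) \<Rightarrow> ('a \<times> 'b \<Rightarrow> real)
     \<Rightarrow> real^'n \<Rightarrow> real^'n \<Rightarrow> real^'n^'n" where
  "mixed_hess \<phi> \<psi> c a b = (\<chi> i. \<chi> j. pder [(0, axis j 1), (axis i 1, 0)]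
       (\<lambda>p::(real^'n) \<times> (real^'n). c (\<phi> (fst p), \<psi> (snd p))) (a, b))"

definition cond_A1 :: "'n::finite itself \<Rightarrow> 'a::euclidean_space set \<Rightarrow> 'b::euclidean_space set
     \<Rightarrow> ('a \<times> 'b \<Rightarrow> real) \<Rightarrow> bool" where
  "cond_A1 T X Y c \<longleftrightarrow>
     (\<forall>(\<phi>::real^'n \<Rightarrow> 'a) U. chart X \<phi> U \<longrightarrow>
       (\<forall>a\<in>U. \<forall>y1\<in>Y. \<forall>y2\<in>Y.
          (\<phi> a, y1) \<notin> sing T X Y c \<longrightarrow> (\<phi> a, y2) \<notin> sing T X Y c \<longrightarrow>
          grad_x \<phi> c y1 a = grad_x \<phi> c y2 a \<longrightarrow> y1 = y2))"

definition cond_A2 :: "'n::finite itself \<Rightarrow> 'a::euclidean_space set \<Rightarrow> 'b::euclidean_space set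
     \<Rightarrow> ('a \<times> 'b \<Rightarrow> real) \<Rightarrow> bool" where
  "cond_A2 T X Y c \<longleftrightarrow>
     (\<forall>(\<phi>::real^'n \<Rightarrow> 'a) U (\<psi>::real^'n \<Rightarrow> 'b) V. chart X \<phi> U \<longrightarrow> chart Y \<psi> V \<longrightarrow>
       (\<forall>a\<in>U. \<forall>b\<in>V. (\<phi> a, \<psi> b) \<notin> sing T X Y c \<longrightarrow> det (mixed_hess \<phi> \<psi> c a b) \<noteq> 0))"

definition ctrans :: "'a set \<Rightarrow> ('a \<times> 'b \<Rightarrow> real) \<Rightarrow> ('a \<Rightarrow> real) \<Rightarrow> 'b \<Rightarrow> real" where
  "ctrans X c u y = (SUP x\<in>X. - c (x, y) - u x)"

definition ctrans' :: "'b set \<Rightarrow> ('a \<times> 'b \<Rightarrow> real) \<Rightarrow> ('b \<Rightarrow> real) \<Rightarrow> 'a \<Rightarrow> real" where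
  "ctrans' Y c v x = (SUP y\<in>Y. - c (x, y) - v y)"

text \<open>u is c-convex iff (u^c)^c = u on X (bdd_below makes the real suprema
 genuine; it is implied by finiteness of u^c).\<close>
definition c_convex :: "'a set \<Rightarrow> 'b set \<Rightarrow> ('a \<times> 'b \<Rightarrow> real) \<Rightarrow> ('a \<Rightarrow> real) \<Rightarrow> bool" where
  "c_convex X Y c u \<longleftrightarrow> bdd_below (u ` X) \<and> (\<forall>x\<in>X. ctrans' Y c (ctrans X c u) x = u x)"

definition vk :: "real \<Rightarrow> ('a \<times> 'b \<Rightarrow> real) \<Rightarrow> 'a measure \<Rightarrow> ('a \<Rightarrow> real) \<Rightarrow> 'b \<Rightarrow> real" where
  "vk k c \<mu> u y = (1 / k) * ln (integral\<^sup>L \<mu> (\<lambda>x. exp (- k * c (x, y) - k * u x)))"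

definition Sk :: "real \<Rightarrow> ('a \<times> 'b \<Rightarrow> real) \<Rightarrow> 'a measure \<Rightarrow> 'b measure \<Rightarrow> ('a \<Rightarrow> real) \<Rightarrow> 'a \<Rightarrow> real" where
  "Sk k c \<mu> \<nu> u x = (1 / k) * ln (integral\<^sup>L \<nu> (\<lambda>y. exp (- k * c (x, y) - k * vk k c \<mu> u y)))"

definition Lset :: "'a::topological_space set \<Rightarrow> ('a \<times> 'b \<Rightarrow> real) \<Rightarrow> 'a measure \<Rightarrow> 'b measure \<Rightarrow> ('a \<Rightarrow> real)
     \<Rightarrow> real \<Rightarrow> ('a \<Rightarrow> real) set" where
  "Lset X c \<mu> \<nu> u0 t = {w. continuous_on X w \<and>
     (\<exists>(k::nat \<Rightarrow> real) (m::nat \<Rightarrow> nat). filterlim k at_top sequentially \<and>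
        (\<lambda>j. real (m j) / k j) \<longlonglongrightarrow> t \<and>
        uniform_limit X (\<lambda>j. (Sk (k j) c \<mu> \<nu> ^^ m j) u0) w sequentially)}"

definition u_lim :: "'a::topological_space set \<Rightarrow> ('a \<times> 'b \<Rightarrow> real) \<Rightarrow> 'a measure \<Rightarrow> 'b measure \<Rightarrow> ('a \<Rightarrow> real)
     \<Rightarrow> real \<Rightarrow> 'a \<Rightarrow> real" where
  "u_lim X c \<mu> \<nu> u0 t x = (SUP w\<in>Lset X c \<mu> \<nu> u0 t. w x)"

end

(* The scaled Sinkhorn operator is the composition of two soft c-transforms
   a |-> (1/k) ln (integral of exp (- k c - k a)), i.e. soft maxima of - c - a.
   Every soft c-transform, like every c-transform, has the modulus of continuity
   f x - f x' <= sup_y (c (x', y) - c (x, y)); so the iterates u_m are uniformly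
   equicontinuous, and their oscillation is at most 2 sup |c|.  By Fubini and Jensen
   the means of u_m and of its soft transform v[u_m] do not increase along the
   iteration; with the oscillation bound this bounds u_m uniformly in k and m.
   Because the volume form charges balls uniformly, S^(k) u is uniformly close to the
   c-convex function v[u]^c once k is large.  Hence, by Arzela-Ascoli, L_t is
   nonempty, and its elements are bounded uniform limits of c-convex functions,
   hence c-convex; a pointwise supremum of such a bounded family is again c-convex. *)

theory Submission
  imports Defs "HOL-Complex_Analysis.Great_Picard"
begin

lemma bdd_above_if_abs_le:
  fixes g :: "'x \<Rightarrow> real"
  assumes "\<And>s. s \<in> S \<Longrightarrow> \<bar>g s\<bar> \<le> B"
  shows "bdd_above (g ` S)"
  by (rule bdd_aboveI2[where M = B]) (use assms in \<open>auto simp: abs_le_iff\<close>)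

lemma bdd_below_if_abs_le:
  fixes g :: "'x \<Rightarrow> real"
  assumes "\<And>s. s \<in> S \<Longrightarrow> \<bar>g s\<bar> \<le> B"
  shows "bdd_below (g ` S)"
proof (rule bdd_belowI2[where m = "- B"])
  show "- B \<le> g s" if "s \<in> S" for s
    using assms[OF that] by linarith
qed

lemma cSUP_le_cSUP_plus:
  fixes f g :: "'x \<Rightarrow> real"
  assumes "S \<noteq> {}" "bdd_above (g ` S)" "\<And>s. s \<in> S \<Longrightarrow> f s \<le> g s + e"
  shows "(SUP s\<in>S. f s) \<le> (SUP s\<in>S. g s) + e"
proof (rule cSUP_least[OF assms(1)])
  fix s assume "s \<in> S"
  then show "f s \<le> (SUP s\<in>S. g s) + e"
    using cSUP_upper[OF _ assms(2)] assms(3) by (meson add_right_mono order_trans)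
qed

lemma cSUP_abs_le:
  fixes g :: "'x \<Rightarrow> real"
  assumes "S \<noteq> {}" "\<And>s. s \<in> S \<Longrightarrow> \<bar>g s\<bar> \<le> B"
  shows "\<bar>(SUP s\<in>S. g s)\<bar> \<le> B"
proof -
  obtain s where s: "s \<in> S" using assms(1) by auto
  have "g s \<le> (SUP s\<in>S. g s)"
    by (rule cSUP_upper[OF s bdd_above_if_abs_le[OF assms(2)]])
  moreover have "(SUP s\<in>S. g s) \<le> B"
    using assms by (intro cSUP_least) (auto simp: abs_le_iff)
  ultimately show ?thesis
    using assms(2)[OF s] by (simp add: abs_le_iff)
qed

section \<open>Soft maxima on probability spaces\<close>

definition log_mean_exp :: "real \<Rightarrow> 'a measure \<Rightarrow> ('a \<Rightarrow> real) \<Rightarrow> real" where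
  "log_mean_exp k M f = (1 / k) * ln (\<integral>x. exp (k * f x) \<partial>M)"

context prob_space
begin

lemma integrable_bounded:
  assumes "(f :: 'a \<Rightarrow> real) \<in> borel_measurable M" "\<And>x. x \<in> space M \<Longrightarrow> \<bar>f x\<bar> \<le> B"
  shows "integrable M f"
  by (rule integrable_const_bound[where B = B]) (use assms in auto)

lemma integrable_exp_bounded:
  assumes "(f :: 'a \<Rightarrow> real) \<in> borel_measurable M" "\<And>x. x \<in> space M \<Longrightarrow> \<bar>f x\<bar> \<le> B"
  shows "integrable M (\<lambda>x. exp (k * f x))"
proof (rule integrable_const_bound[where B = "exp (\<bar>k\<bar> * B)"])
  have "k * f x \<le> \<bar>k\<bar> * B" if "x \<in> space M" for x
    using abs_ge_self[of "k * f x"] mult_left_mono[OF assms(2)[OF that], of "\<bar>k\<bar>"]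
    by (simp add: abs_mult)
  then show "AE x in M. norm (exp (k * f x)) \<le> exp (\<bar>k\<bar> * B)"
    by auto
qed (use assms in auto)

lemma exp_integral_le_integral_exp:
  assumes "(f :: 'a \<Rightarrow> real) \<in> borel_measurable M" "\<And>x. x \<in> space M \<Longrightarrow> \<bar>f x\<bar> \<le> B"
  shows "exp (\<integral>x. f x \<partial>M) \<le> (\<integral>x. exp (f x) \<partial>M)"
  using jensens_inequality[of f UNIV 0 0 exp] integrable_bounded[OF assms]
    integrable_exp_bounded[OF assms, of 1] exp_convex by simp

lemma integral_exp_pos:
  assumes "(f :: 'a \<Rightarrow> real) \<in> borel_measurable M" "\<And>x. x \<in> space M \<Longrightarrow> \<bar>f x\<bar> \<le> B"
  shows "0 < (\<integral>x. exp (k * f x) \<partial>M)"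
proof -
  have "exp (\<integral>x. k * f x \<partial>M) \<le> (\<integral>x. exp (k * f x) \<partial>M)"
    by (rule exp_integral_le_integral_exp[where B = "\<bar>k\<bar> * B"])
       (use assms in \<open>auto simp: abs_mult intro: mult_left_mono\<close>)
  then show ?thesis
    using exp_gt_zero less_le_trans by blast
qed

lemma exp_log_mean_exp:
  assumes "k > 0" "(f :: 'a \<Rightarrow> real) \<in> borel_measurable M" "\<And>x. x \<in> space M \<Longrightarrow> \<bar>f x\<bar> \<le> B"
  shows "exp (k * log_mean_exp k M f) = (\<integral>x. exp (k * f x) \<partial>M)"
  using integral_exp_pos[OF assms(2,3), of k] assms(1) by (simp add: log_mean_exp_def)

lemma log_mean_exp_const: "k \<noteq> 0 \<Longrightarrow> log_mean_exp k M (\<lambda>_. a) = a"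
  by (simp add: log_mean_exp_def prob_space)

lemma log_mean_exp_le_plus:
  assumes k: "k > 0"
    and f: "(f :: 'a \<Rightarrow> real) \<in> borel_measurable M" "\<And>x. x \<in> space M \<Longrightarrow> \<bar>f x\<bar> \<le> B"
    and g: "(g :: 'a \<Rightarrow> real) \<in> borel_measurable M" "\<And>x. x \<in> space M \<Longrightarrow> \<bar>g x\<bar> \<le> B'"
    and le: "\<And>x. x \<in> space M \<Longrightarrow> f x \<le> g x + e"
  shows "log_mean_exp k M f \<le> log_mean_exp k M g + e"
proof -
  have "(\<integral>x. exp (k * f x) \<partial>M) \<le> (\<integral>x. exp (k * e) * exp (k * g x) \<partial>M)"
  proof (rule integral_mono)
    fix x assume "x \<in> space M"
    then have "k * f x \<le> k * e + k * g x"
      using le k by (simp add: distrib_left[symmetric] add.commute)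
    then show "exp (k * f x) \<le> exp (k * e) * exp (k * g x)"
      by (simp flip: exp_add)
  qed (use integrable_exp_bounded[OF f] integrable_exp_bounded[OF g] in auto)
  then have "ln (\<integral>x. exp (k * f x) \<partial>M) \<le> ln (exp (k * e) * (\<integral>x. exp (k * g x) \<partial>M))"
    using integral_exp_pos[OF f, of k] integral_exp_pos[OF g, of k] by simp
  also have "\<dots> = k * e + ln (\<integral>x. exp (k * g x) \<partial>M)"
    using integral_exp_pos[OF g, of k] by (simp add: ln_mult)
  finally have "ln (\<integral>x. exp (k * f x) \<partial>M) \<le> k * e + ln (\<integral>x. exp (k * g x) \<partial>M)" .
  then show ?thesis
    using k by (simp add: log_mean_exp_def field_simps)
qed

lemma log_mean_exp_le:
  assumes "k > 0" "(f :: 'a \<Rightarrow> real) \<in> borel_measurable M" "\<And>x. x \<in> space M \<Longrightarrow> \<bar>f x\<bar> \<le> B"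
    and "\<And>x. x \<in> space M \<Longrightarrow> f x \<le> a"
  shows "log_mean_exp k M f \<le> a"
  using log_mean_exp_le_plus[OF assms(1-3), of "\<lambda>_. a" "\<bar>a\<bar>" 0] assms(1,4)
  by (simp add: log_mean_exp_const)

lemma log_mean_exp_ge_mass:
  assumes k: "k > 0"
    and f: "(f :: 'a \<Rightarrow> real) \<in> borel_measurable M" "\<And>x. x \<in> space M \<Longrightarrow> \<bar>f x\<bar> \<le> B"
    and A: "A \<in> sets M" "0 < p" "p \<le> measure M A"
    and ge: "\<And>x. x \<in> A \<Longrightarrow> a \<le> f x"
  shows "a + ln p / k \<le> log_mean_exp k M f"
proof -
  have "p * exp (k * a) \<le> measure M A * exp (k * a)"
    using A by (intro mult_right_mono) auto
  also have "\<dots> = (\<integral>x. indicator A x * exp (k * a) \<partial>M)"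
    using A by simp
  also have "\<dots> \<le> (\<integral>x. exp (k * f x) \<partial>M)"
  proof (rule integral_mono)
    show "integrable M (\<lambda>x. indicator A x * exp (k * a))"
      using A by (intro integrable_const_bound[where B = "exp (k * a)"]) (auto simp: indicator_def)
    show "indicator A x * exp (k * a) \<le> exp (k * f x)" for x
      using ge[of x] k by (auto simp: indicator_def)
  qed (rule integrable_exp_bounded[OF f])
  finally have "ln p + k * a \<le> ln (\<integral>x. exp (k * f x) \<partial>M)"
    using A(2) integral_exp_pos[OF f, of k]
    by (subst (asm) ln_le_cancel_iff[symmetric]) (auto simp: ln_mult)
  then have "(ln p + k * a) / k \<le> ln (\<integral>x. exp (k * f x) \<partial>M) / k"
    using k by (simp add: divide_right_mono)
  then show ?thesis
    using k by (simp add: log_mean_exp_def add_divide_distrib)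
qed

lemma integral_le_log_mean_exp:
  assumes k: "k > 0"
    and f: "(f :: 'a \<Rightarrow> real) \<in> borel_measurable M" "\<And>x. x \<in> space M \<Longrightarrow> \<bar>f x\<bar> \<le> B"
  shows "(\<integral>x. f x \<partial>M) \<le> log_mean_exp k M f"
proof -
  have "exp (\<integral>x. k * f x \<partial>M) \<le> (\<integral>x. exp (k * f x) \<partial>M)"
    by (rule exp_integral_le_integral_exp[where B = "k * B"])
       (use f k in \<open>auto simp: abs_mult intro: mult_left_mono\<close>)
  then have "k * (\<integral>x. f x \<partial>M) \<le> ln (\<integral>x. exp (k * f x) \<partial>M)"
    using integral_exp_pos[OF f, of k] by (simp add: ln_ge_iff)
  then show ?thesis
    using k by (simp add: log_mean_exp_def field_simps)
qed

end

section \<open>c-transforms and c-Lipschitz functions\<close>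

definition c_Lipschitz :: "'a set \<Rightarrow> 'b set \<Rightarrow> ('a \<times> 'b \<Rightarrow> real) \<Rightarrow> ('a \<Rightarrow> real) \<Rightarrow> bool" where
  "c_Lipschitz X Y c f \<longleftrightarrow>
     (\<forall>x\<in>X. \<forall>x'\<in>X. \<forall>e. (\<forall>y\<in>Y. c (x', y) \<le> c (x, y) + e) \<longrightarrow> f x \<le> f x' + e)"

lemma c_LipschitzI:
  "(\<And>x x' e. x \<in> X \<Longrightarrow> x' \<in> X \<Longrightarrow> (\<And>y. y \<in> Y \<Longrightarrow> c (x', y) \<le> c (x, y) + e) \<Longrightarrow> f x \<le> f x' + e)
   \<Longrightarrow> c_Lipschitz X Y c f"
  unfolding c_Lipschitz_def by blast

lemma c_LipschitzD:
  "c_Lipschitz X Y c f \<Longrightarrow> x \<in> X \<Longrightarrow> x' \<in> X \<Longrightarrow> (\<And>y. y \<in> Y \<Longrightarrow> c (x', y) \<le> c (x, y) + e)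
   \<Longrightarrow> f x \<le> f x' + e"
  unfolding c_Lipschitz_def by blast

lemma c_Lipschitz_uniformly_equicontinuous:
  fixes c :: "'a::metric_space \<times> 'b::metric_space \<Rightarrow> real"
  assumes "compact X" "compact Y" "continuous_on (X \<times> Y) c" "e > 0"
  obtains d where "d > 0"
    "\<And>f x x'. c_Lipschitz X Y c f \<Longrightarrow> x \<in> X \<Longrightarrow> x' \<in> X \<Longrightarrow> dist x x' < d \<Longrightarrow> \<bar>f x - f x'\<bar> < e"
proof -
  have "uniformly_continuous_on (X \<times> Y) c"
    using assms by (intro compact_uniformly_continuous compact_Times)
  then obtain d where d: "d > 0"
    "\<And>p p'. p \<in> X \<times> Y \<Longrightarrow> p' \<in> X \<times> Y \<Longrightarrow> dist p' p < d \<Longrightarrow> dist (c p') (c p) < e / 2"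
    using \<open>e > 0\<close> unfolding uniformly_continuous_on_def by (metis half_gt_zero)
  show ?thesis
  proof (rule that[OF \<open>d > 0\<close>])
    fix f x x' assume f: "c_Lipschitz X Y c f" and x: "x \<in> X" "x' \<in> X" "dist x x' < d"
    have close: "\<bar>c (x, y) - c (x', y)\<bar> < e / 2" if "y \<in> Y" for y
      using d(2)[of "(x', y)" "(x, y)"] x that by (simp add: dist_Pair_Pair dist_real_def)
    have "c (x', y) \<le> c (x, y) + e / 2" "c (x, y) \<le> c (x', y) + e / 2" if "y \<in> Y" for y
      using close[OF that] by linarith+
    then have "f x \<le> f x' + e / 2" "f x' \<le> f x + e / 2"
      using c_LipschitzD[OF f] x by blast+
    then show "\<bar>f x - f x'\<bar> < e"
      using \<open>e > 0\<close> by (simp add: abs_le_iff)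
  qed
qed

lemma c_Lipschitz_continuous_on:
  fixes c :: "'a::metric_space \<times> 'b::metric_space \<Rightarrow> real"
  assumes "compact X" "compact Y" "continuous_on (X \<times> Y) c" "c_Lipschitz X Y c f"
  shows "continuous_on X f"
  unfolding continuous_on_iff
proof (intro ballI allI impI)
  fix x and e :: real assume "x \<in> X" "e > 0"
  obtain d where "d > 0"
    "\<And>f x x'. c_Lipschitz X Y c f \<Longrightarrow> x \<in> X \<Longrightarrow> x' \<in> X \<Longrightarrow> dist x x' < d \<Longrightarrow> \<bar>f x - f x'\<bar> < e"
    using c_Lipschitz_uniformly_equicontinuous[OF assms(1-3) \<open>e > 0\<close>] by blast
  then show "\<exists>d>0. \<forall>x'\<in>X. dist x' x < d \<longrightarrow> dist (f x') (f x) < e"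
    using assms(4) \<open>x \<in> X\<close> by (auto simp: dist_real_def)
qed

lemma c_Lipschitz_minus_cost:
  assumes "y \<in> Y"
  shows "c_Lipschitz X Y c (\<lambda>x. - c (x, y))"
proof (rule c_LipschitzI)
  fix x x' e assume "\<And>y. y \<in> Y \<Longrightarrow> c (x', y) \<le> c (x, y) + e"
  from this[OF assms] show "- c (x, y) \<le> - c (x', y) + e" by linarith
qed

lemma ctrans_swap: "ctrans Y (c \<circ> prod.swap) v = ctrans' Y c v"
  by (simp add: fun_eq_iff ctrans_def ctrans'_def)

locale bounded_cost =
  fixes X :: "'a set" and Y :: "'b set" and c :: "'a \<times> 'b \<Rightarrow> real" and C :: real
  assumes X_nonempty: "X \<noteq> {}" and Y_nonempty: "Y \<noteq> {}"
    and cost_abs_le: "\<And>x y. x \<in> X \<Longrightarrow> y \<in> Y \<Longrightarrow> \<bar>c (x, y)\<bar> \<le> C"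
begin

lemma ctrans_abs_le:
  assumes "\<And>x. x \<in> X \<Longrightarrow> \<bar>u x\<bar> \<le> B" "y \<in> Y"
  shows "\<bar>ctrans X c u y\<bar> \<le> C + B"
  unfolding ctrans_def
  using assms cost_abs_le by (intro cSUP_abs_le[OF X_nonempty]) (fastforce simp: abs_le_iff)

lemma ctrans'_abs_le:
  assumes "\<And>y. y \<in> Y \<Longrightarrow> \<bar>v y\<bar> \<le> B" "x \<in> X"
  shows "\<bar>ctrans' Y c v x\<bar> \<le> C + B"
  unfolding ctrans'_def
  using assms cost_abs_le by (intro cSUP_abs_le[OF Y_nonempty]) (fastforce simp: abs_le_iff)

lemma ctrans'_ctrans_le:
  assumes u: "\<And>x. x \<in> X \<Longrightarrow> \<bar>u x\<bar> \<le> B" and x: "x \<in> X"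
  shows "ctrans' Y c (ctrans X c u) x \<le> u x"
  unfolding ctrans'_def
proof (rule cSUP_least[OF Y_nonempty])
  fix y assume y: "y \<in> Y"
  have "bdd_above ((\<lambda>x. - c (x, y) - u x) ` X)"
    using u cost_abs_le[OF _ y] by (intro bdd_above_if_abs_le[where B = "C + B"]) (fastforce simp: abs_le_iff)
  then have "- c (x, y) - u x \<le> ctrans X c u y"
    unfolding ctrans_def by (rule cSUP_upper[OF x])
  then show "- c (x, y) - ctrans X c u y \<le> u x" by linarith
qed

lemma ctrans'_ctrans_le_plus:
  assumes u: "\<And>x. x \<in> X \<Longrightarrow> \<bar>u x\<bar> \<le> B" and w: "\<And>x. x \<in> X \<Longrightarrow> \<bar>w x\<bar> \<le> B'"
    and le: "\<And>x. x \<in> X \<Longrightarrow> u x \<le> w x + e" and x: "x \<in> X"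
  shows "ctrans' Y c (ctrans X c u) x \<le> ctrans' Y c (ctrans X c w) x + e"
proof -
  have "ctrans X c w y \<le> ctrans X c u y + e" if y: "y \<in> Y" for y
    unfolding ctrans_def
    using u cost_abs_le[OF _ y] le
    by (intro cSUP_le_cSUP_plus[OF X_nonempty] bdd_above_if_abs_le[where B = "C + B"])
       (fastforce simp: abs_le_iff)+
  then show ?thesis
    unfolding ctrans'_def
    using ctrans_abs_le[OF w] cost_abs_le[OF x]
    by (intro cSUP_le_cSUP_plus[OF Y_nonempty] bdd_above_if_abs_le[where B = "C + (C + B')"])
       (fastforce simp: abs_le_iff)+
qed

lemma ctrans'_le_ctrans'_ctrans_ctrans':
  assumes v: "\<And>y. y \<in> Y \<Longrightarrow> \<bar>v y\<bar> \<le> B" and x: "x \<in> X"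
  shows "ctrans' Y c v x \<le> ctrans' Y c (ctrans X c (ctrans' Y c v)) x"
proof -
  have "ctrans X c (ctrans' Y c v) y \<le> v y" if y: "y \<in> Y" for y
    unfolding ctrans_def
  proof (rule cSUP_least[OF X_nonempty])
    fix x assume x: "x \<in> X"
    have "bdd_above ((\<lambda>y. - c (x, y) - v y) ` Y)"
      using v cost_abs_le[OF x] by (intro bdd_above_if_abs_le[where B = "C + B"]) (fastforce simp: abs_le_iff)
    then have "- c (x, y) - v y \<le> ctrans' Y c v x"
      unfolding ctrans'_def by (rule cSUP_upper[OF y])
    then show "- c (x, y) - ctrans' Y c v x \<le> v y" by linarith
  qed
  moreover have "bdd_above ((\<lambda>y. - c (x, y) - ctrans X c (ctrans' Y c v) y) ` Y)"
    using ctrans_abs_le[OF ctrans'_abs_le[OF v]] cost_abs_le[OF x]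
    by (intro bdd_above_if_abs_le[where B = "C + (C + (C + B))"]) (fastforce simp: abs_le_iff)
  ultimately have "(SUP y\<in>Y. - c (x, y) - v y) \<le> (SUP y\<in>Y. - c (x, y) - ctrans X c (ctrans' Y c v) y) + 0"
    by (intro cSUP_le_cSUP_plus[OF Y_nonempty]) auto
  then show ?thesis
    by (simp add: ctrans'_def)
qed

lemma c_Lipschitz_le_plus:
  assumes "c_Lipschitz X Y c f" "x \<in> X" "x' \<in> X"
  shows "f x \<le> f x' + 2 * C"
proof (rule c_LipschitzD[OF assms])
  show "c (x', y) \<le> c (x, y) + 2 * C" if "y \<in> Y" for y
    using cost_abs_le[OF assms(2) that] cost_abs_le[OF assms(3) that] by (simp add: abs_le_iff)
qed

lemma ctrans'_c_Lipschitz: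
  assumes v: "\<And>y. y \<in> Y \<Longrightarrow> \<bar>v y\<bar> \<le> B"
  shows "c_Lipschitz X Y c (ctrans' Y c v)"
proof (rule c_LipschitzI)
  fix x x' e assume x: "x \<in> X" "x' \<in> X" and le: "\<And>y. y \<in> Y \<Longrightarrow> c (x', y) \<le> c (x, y) + e"
  have "bdd_above ((\<lambda>y. - c (x', y) - v y) ` Y)"
    using v cost_abs_le[OF x(2)] by (intro bdd_above_if_abs_le[where B = "C + B"]) (fastforce simp: abs_le_iff)
  moreover have "- c (x, y) - v y \<le> - c (x', y) - v y + e" if "y \<in> Y" for y
    using le[OF that] by linarith
  ultimately show "ctrans' Y c v x \<le> ctrans' Y c v x' + e"
    unfolding ctrans'_def by (intro cSUP_le_cSUP_plus[OF Y_nonempty]) auto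
qed

lemma c_convex_ctrans':
  assumes v: "\<And>y. y \<in> Y \<Longrightarrow> \<bar>v y\<bar> \<le> B"
  shows "c_convex X Y c (ctrans' Y c v)"
  unfolding c_convex_def
proof (intro conjI ballI)
  show "bdd_below (ctrans' Y c v ` X)"
    using ctrans'_abs_le[of v B, OF v] by (rule bdd_below_if_abs_le)
  fix x assume x: "x \<in> X"
  show "ctrans' Y c (ctrans X c (ctrans' Y c v)) x = ctrans' Y c v x"
    using ctrans'_ctrans_le[of "ctrans' Y c v" "C + B", OF ctrans'_abs_le[of v B, OF v] x]
      ctrans'_le_ctrans'_ctrans_ctrans'[of v B, OF v x] by simp
qed

lemma c_convex_bounded:
  assumes "c_convex X Y c u"
  obtains B where "\<And>x. x \<in> X \<Longrightarrow> \<bar>u x\<bar> \<le> B"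
proof -
  obtain L where L: "\<And>x. x \<in> X \<Longrightarrow> L \<le> u x"
    using assms unfolding c_convex_def bdd_below_def by auto
  obtain x0 where x0: "x0 \<in> X" using X_nonempty by blast
  have "\<bar>ctrans X c u y\<bar> \<le> C + \<bar>L\<bar> + \<bar>u x0\<bar>" if y: "y \<in> Y" for y
  proof -
    have bdd: "bdd_above ((\<lambda>x. - c (x, y) - u x) ` X)"
      using L cost_abs_le[OF _ y] by (intro bdd_aboveI2[where M = "C - L"]) (fastforce simp: abs_le_iff)
    have "ctrans X c u y \<le> C - L"
      unfolding ctrans_def
      using L cost_abs_le[OF _ y] by (intro cSUP_least[OF X_nonempty]) (fastforce simp: abs_le_iff)
    moreover have "- c (x0, y) - u x0 \<le> ctrans X c u y"
      unfolding ctrans_def by (rule cSUP_upper[OF x0 bdd])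
    ultimately show ?thesis
      using cost_abs_le[OF x0 y] abs_ge_minus_self[of L] abs_ge_self[of "u x0"]
      unfolding abs_le_iff by linarith
  qed
  then have "\<bar>u x\<bar> \<le> C + (C + \<bar>L\<bar> + \<bar>u x0\<bar>)" if "x \<in> X" for x
    using ctrans'_abs_le[OF _ that] assms that unfolding c_convex_def by metis
  then show ?thesis
    using that by blast
qed

lemma c_convex_c_Lipschitz:
  assumes "c_convex X Y c u"
  shows "c_Lipschitz X Y c u"
proof -
  obtain B where B: "\<And>x. x \<in> X \<Longrightarrow> \<bar>u x\<bar> \<le> B"
    using c_convex_bounded[OF assms] by blast
  have "c_Lipschitz X Y c (ctrans' Y c (ctrans X c u))"
    by (rule ctrans'_c_Lipschitz[OF ctrans_abs_le[OF B]])
  then show ?thesis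
    using assms unfolding c_convex_def c_Lipschitz_def by simp
qed

lemma c_convex_uniform_approx:
  assumes approx: "\<And>\<eta>. \<eta> > 0 \<Longrightarrow> \<exists>g. c_convex X Y c g \<and> (\<forall>x\<in>X. \<bar>w x - g x\<bar> \<le> \<eta>)"
  shows "c_convex X Y c w"
proof -
  obtain g1 B where g1: "\<And>x. x \<in> X \<Longrightarrow> \<bar>w x - g1 x\<bar> \<le> 1" and B: "\<And>x. x \<in> X \<Longrightarrow> \<bar>g1 x\<bar> \<le> B"
    using approx[of 1] c_convex_bounded by (metis zero_less_one)
  have w: "\<bar>w x\<bar> \<le> B + 1" if "x \<in> X" for x
    using g1[OF that] B[OF that] by (simp add: abs_le_iff)
  have "w x \<le> ctrans' Y c (ctrans X c w) x + \<epsilon>" if x: "x \<in> X" and "\<epsilon> > 0" for x \<epsilon>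
  proof -
    obtain g where g: "c_convex X Y c g" "\<And>x. x \<in> X \<Longrightarrow> \<bar>w x - g x\<bar> \<le> \<epsilon> / 2"
      using approx[of "\<epsilon> / 2"] \<open>\<epsilon> > 0\<close> by auto
    obtain Bg where Bg: "\<And>x. x \<in> X \<Longrightarrow> \<bar>g x\<bar> \<le> Bg"
      using c_convex_bounded[OF g(1)] by blast
    have "g x = ctrans' Y c (ctrans X c g) x"
      using g(1) x unfolding c_convex_def by simp
    also have "\<dots> \<le> ctrans' Y c (ctrans X c w) x + \<epsilon> / 2"
    proof (rule ctrans'_ctrans_le_plus[OF Bg w _ x])
      show "g x' \<le> w x' + \<epsilon> / 2" if "x' \<in> X" for x'
        using g(2)[OF that] unfolding abs_le_iff by linarith
    qed
    finally show ?thesis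
      using g(2)[OF x] unfolding abs_le_iff by linarith
  qed
  then have "w x = ctrans' Y c (ctrans X c w) x" if "x \<in> X" for x
    using ctrans'_ctrans_le[OF w that] that by (meson antisym field_le_epsilon)
  moreover have "bdd_below (w ` X)"
    using w by (rule bdd_below_if_abs_le)
  ultimately show ?thesis
    unfolding c_convex_def by simp
qed

lemma c_convex_SUP:
  assumes W: "W \<noteq> {}" "\<And>w. w \<in> W \<Longrightarrow> c_convex X Y c w"
    and B: "\<And>w x. w \<in> W \<Longrightarrow> x \<in> X \<Longrightarrow> \<bar>w x\<bar> \<le> B"
  shows "c_convex X Y c (\<lambda>x. SUP w\<in>W. w x)"
proof -
  define U where "U x = (SUP w\<in>W. w x)" for x
  have U: "\<bar>U x\<bar> \<le> B" if "x \<in> X" for x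
    unfolding U_def using B[OF _ that] by (rule cSUP_abs_le[OF W(1)])
  have "U x \<le> ctrans' Y c (ctrans X c U) x" if x: "x \<in> X" for x
    unfolding U_def[of x]
  proof (rule cSUP_least[OF W(1)])
    fix w assume w: "w \<in> W"
    have "w x = ctrans' Y c (ctrans X c w) x"
      using W(2)[OF w] x unfolding c_convex_def by simp
    also have "\<dots> \<le> ctrans' Y c (ctrans X c U) x + 0"
      using B[OF w] U cSUP_upper[OF w bdd_above_if_abs_le[OF B]]
      by (intro ctrans'_ctrans_le_plus[OF _ _ _ x]) (auto simp: U_def)
    finally show "w x \<le> ctrans' Y c (ctrans X c U) x" by simp
  qed
  then have "ctrans' Y c (ctrans X c U) x = U x" if "x \<in> X" for x
    using ctrans'_ctrans_le[of U B, OF U that] that by (simp add: antisym)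
  moreover have "bdd_below (U ` X)"
    using U by (rule bdd_below_if_abs_le)
  ultimately show ?thesis
    unfolding c_convex_def U_def by simp
qed

end

definition uniformly_charges_balls :: "'a::metric_space measure \<Rightarrow> 'a set \<Rightarrow> bool" where
  "uniformly_charges_balls M S \<longleftrightarrow> (\<forall>r>0. \<exists>p>0. \<forall>x\<in>S. p \<le> measure M (ball x r \<inter> S))"

locale compact_prob_space = prob_space M for M :: "'a::metric_space measure" +
  fixes S :: "'a set"
  assumes compact_support: "compact S"
    and sets_eq_restrict_borel: "sets M = sets (restrict_space borel S)"
begin

lemma space_eq: "space M = S"
  using sets_eq_imp_space_eq[OF sets_eq_restrict_borel] by (simp add: space_restrict_space)

lemma support_nonempty: "S \<noteq> {}"
  using not_empty space_eq by simp

lemma Int_ball_in_sets: "ball x r \<inter> S \<in> sets M"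
  unfolding sets_eq_restrict_borel sets_restrict_space
  by (auto simp: image_iff intro!: bexI[of _ "ball x r"])

lemma measurable_ident_borel: "(\<lambda>x. x) \<in> measurable M borel"
  unfolding measurable_cong_sets[OF sets_eq_restrict_borel refl]
  by (rule measurable_restrict_space1) simp

lemma continuous_on_bounded_measurable:
  fixes f :: "'a \<Rightarrow> real"
  assumes "continuous_on S f"
  obtains B where "f \<in> borel_measurable M" "\<And>x. x \<in> space M \<Longrightarrow> \<bar>f x\<bar> \<le> B"
proof -
  have "bounded (f ` S)"
    by (rule compact_imp_bounded[OF compact_continuous_image[OF assms compact_support]])
  then obtain B where "\<And>x. x \<in> S \<Longrightarrow> \<bar>f x\<bar> \<le> B"
    by (auto simp: bounded_iff)
  moreover have "f \<in> borel_measurable M"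
    using borel_measurable_continuous_on_restrict[OF assms]
      measurable_cong_sets[OF sets_eq_restrict_borel refl] by blast
  ultimately show ?thesis
    using that space_eq by blast
qed

lemma integrable_continuous_on:
  fixes f :: "'a \<Rightarrow> real"
  shows "continuous_on S f \<Longrightarrow> integrable M f"
  by (metis continuous_on_bounded_measurable integrable_bounded)

lemma uniformly_charges_balls_if_balls_pos:
  assumes pos: "\<And>x r. x \<in> S \<Longrightarrow> r > 0 \<Longrightarrow> 0 < emeasure M (ball x r \<inter> S)"
  shows "uniformly_charges_balls M S"
  unfolding uniformly_charges_balls_def
proof (intro allI impI)
  fix r :: real assume r: "r > 0"
  obtain C where C: "C \<subseteq> S" "finite C" "S \<subseteq> (\<Union>z\<in>C. ball z (r / 2))"
    using compactE_image[OF compact_support, of S "\<lambda>z. ball z (r / 2)"] r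
    by (metis centre_in_ball half_gt_zero open_ball UN_I subsetI)
  have "C \<noteq> {}" using C(3) support_nonempty by auto
  define p where "p = Min ((\<lambda>z. measure M (ball z (r / 2) \<inter> S)) ` C)"
  have "p > 0"
    unfolding p_def using C \<open>C \<noteq> {}\<close> pos r by (subst Min_gr_iff) (auto simp: emeasure_eq_measure)
  moreover have "p \<le> measure M (ball x r \<inter> S)" if "x \<in> S" for x
  proof -
    obtain z where z: "z \<in> C" "x \<in> ball z (r / 2)" using C(3) \<open>x \<in> S\<close> by blast
    have "ball z (r / 2) \<subseteq> ball x r"
    proof
      fix w assume "w \<in> ball z (r / 2)"
      then show "w \<in> ball x r"
        using z(2) dist_triangle[of x w z] by (auto simp: dist_commute)
    qed
    then have "measure M (ball z (r / 2) \<inter> S) \<le> measure M (ball x r \<inter> S)"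
      by (intro finite_measure_mono Int_ball_in_sets) auto
    moreover have "p \<le> measure M (ball z (r / 2) \<inter> S)"
      unfolding p_def using z(1) C(2) by (intro Min_le) auto
    ultimately show ?thesis by linarith
  qed
  ultimately show "\<exists>p>0. \<forall>x\<in>S. p \<le> measure M (ball x r \<inter> S)" by blast
qed


(* A ball of mass at least p around a near-maximiser costs at most ln p / k. *)
lemma SUP_le_log_mean_exp_plus:
  assumes charges: "uniformly_charges_balls M S" and d: "d > 0" and e: "e > 0"
  obtains K where "K > 0"
    "\<And>k f. K \<le> k \<Longrightarrow> continuous_on S f \<Longrightarrow>
       (\<And>x x'. x \<in> S \<Longrightarrow> x' \<in> S \<Longrightarrow> dist x x' < d \<Longrightarrow> f x \<le> f x' + e) \<Longrightarrow>
       (SUP x\<in>S. f x) \<le> log_mean_exp k M f + 3 * e"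
proof -
  obtain p where p: "p > 0" "\<And>x. x \<in> S \<Longrightarrow> p \<le> measure M (ball x d \<inter> S)"
    using charges d unfolding uniformly_charges_balls_def by blast
  define K where "K = max 1 (- ln p / e)"
  show ?thesis
  proof (rule that)
    show "K > 0" unfolding K_def by simp
    fix k f assume kK: "K \<le> k" and f: "continuous_on S f"
      and osc: "\<And>x x'. x \<in> S \<Longrightarrow> x' \<in> S \<Longrightarrow> dist x x' < d \<Longrightarrow> f x \<le> f x' + e"
    have k: "k > 0" using kK unfolding K_def by simp
    obtain B where fB: "f \<in> borel_measurable M" "\<And>x. x \<in> space M \<Longrightarrow> \<bar>f x\<bar> \<le> B"
      using continuous_on_bounded_measurable[OF f] by blast
    have "bdd_above (f ` S)"
      using fB(2) space_eq by (intro bdd_above_if_abs_le[where B = B]) auto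
    then obtain x0 where x0: "x0 \<in> S" "(SUP x\<in>S. f x) - e < f x0"
      using less_cSUP_iff[OF support_nonempty, of f "(SUP x\<in>S. f x) - e"] e by auto
    have "(SUP x\<in>S. f x) - 2 * e \<le> f x" if "x \<in> ball x0 d \<inter> S" for x
      using osc[of x0 x] x0 that by auto
    then have "(SUP x\<in>S. f x) - 2 * e + ln p / k \<le> log_mean_exp k M f"
      using log_mean_exp_ge_mass[OF k fB Int_ball_in_sets p(1) p(2)[OF x0(1)]] by blast
    moreover have "- e \<le> ln p / k"
    proof -
      have "- ln p / e \<le> k" using kK unfolding K_def by simp
      then have "- ln p \<le> k * e" by (simp only: pos_divide_le_eq[OF e])
      then show ?thesis using k by (simp add: pos_le_divide_eq mult.commute)
    qed
    ultimately show "(SUP x\<in>S. f x) \<le> log_mean_exp k M f + 3 * e"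
      by linarith
  qed
qed

end

lemma cinf_on_imp_continuous_on: "cinf_on U f \<Longrightarrow> continuous_on U f"
  unfolding cinf_on_def by (metis empty_subsetI list.set(1) pder.simps(1))

lemma emeasure_lborel_cball_pos: "r > 0 \<Longrightarrow> 0 < emeasure lborel (cball (a :: 'a::euclidean_space) r)"
  using emeasure_lborel_cball_finite[of a r] content_cball_pos[of r a]
  by (subst emeasure_eq_ennreal_measure) auto

lemma volume_form_chart_image_pos:
  fixes \<psi> :: "real^'n::finite \<Rightarrow> 'b::euclidean_space"
  assumes vol: "volume_form TYPE('n) Y \<nu>" and chart: "chart Y \<psi> V"
    and ball: "e > 0" "ball b e \<subseteq> V"
  shows "0 < emeasure \<nu> (\<psi> ` ball b e)"
proof -
  obtain \<rho> :: "real^'n \<Rightarrow> real" where \<rho>: "cinf_on V \<rho>" "\<And>a. a \<in> V \<Longrightarrow> \<rho> a > 0"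
      "\<And>B. B \<in> sets lborel \<Longrightarrow> B \<subseteq> V \<Longrightarrow> emeasure \<nu> (\<psi> ` B) = set_nn_integral lborel B (\<lambda>a. ennreal (\<rho> a))"
    using vol chart unfolding volume_form_def by metis
  define K where "K = cball b (e / 2)"
  have K: "compact K" "K \<noteq> {}" "K \<subseteq> ball b e"
    using ball(1) by (auto simp: K_def)
  then obtain a0 where a0: "a0 \<in> K" "\<And>a. a \<in> K \<Longrightarrow> \<rho> a0 \<le> \<rho> a"
    using continuous_attains_inf[of K \<rho>] continuous_on_subset[OF cinf_on_imp_continuous_on[OF \<rho>(1)]] ball(2)
    by (meson order_trans)
  have "a0 \<in> V"
    using a0(1) K(3) ball(2) by blast
  then have "0 < ennreal (\<rho> a0) * emeasure lborel K"
    using \<rho>(2) ball(1) emeasure_lborel_cball_pos[of "e / 2" b]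
    by (auto simp: K_def ennreal_zero_less_mult_iff)
  also have "\<dots> = (\<integral>\<^sup>+ a. ennreal (\<rho> a0) * indicator K a \<partial>lborel)"
    by (simp add: K_def nn_integral_cmult_indicator)
  also have "\<dots> \<le> (\<integral>\<^sup>+ a. ennreal (\<rho> a) * indicator (ball b e) a \<partial>lborel)"
    using a0(2) K(3) by (intro nn_integral_mono) (auto simp: indicator_def ennreal_leI)
  also have "\<dots> = emeasure \<nu> (\<psi> ` ball b e)"
    using \<rho>(3)[of "ball b e"] ball(2) by simp
  finally show ?thesis .
qed

lemma volume_form_ball_pos:
  fixes Y :: "'b::euclidean_space set"
  assumes man: "smooth_manifold TYPE('n::finite) Y" and vol: "volume_form TYPE('n) Y \<nu>"
    and y: "y \<in> Y" and r: "r > 0"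
  shows "0 < emeasure \<nu> (ball y r \<inter> Y)"
proof -
  obtain \<psi> :: "real^'n \<Rightarrow> 'b" and V where chart: "chart Y \<psi> V" and "y \<in> \<psi> ` V"
    using man y unfolding smooth_manifold_def by blast
  then obtain b where b: "b \<in> V" "\<psi> b = y"
    by blast
  have V: "open V" "continuous_on V \<psi>" "\<psi> ` V \<subseteq> Y"
    using chart cinf_on_imp_continuous_on unfolding chart_def by auto
  obtain e1 where e1: "e1 > 0" "\<And>b'. b' \<in> V \<Longrightarrow> dist b' b < e1 \<Longrightarrow> dist (\<psi> b') y < r"
    using V(2) b r unfolding continuous_on_iff by metis
  obtain e2 where e2: "e2 > 0" "ball b e2 \<subseteq> V"
    using V(1) b(1) open_contains_ball by blast
  define e where "e = min e1 e2"
  have e: "e > 0" "ball b e \<subseteq> V"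
    using e1 e2 by (auto simp: e_def)
  have "\<psi> ` ball b e \<subseteq> ball y r \<inter> Y"
    using e V(3) e1(2) by (force simp: e_def dist_commute)
  moreover have "ball y r \<inter> Y \<in> sets \<nu>"
    using vol unfolding volume_form_def sets_restrict_space
    by (auto simp: image_iff intro!: bexI[of _ "ball y r"])
  ultimately have "emeasure \<nu> (\<psi> ` ball b e) \<le> emeasure \<nu> (ball y r \<inter> Y)"
    by (rule emeasure_mono)
  then show ?thesis
    using volume_form_chart_image_pos[OF vol chart e] by order
qed

section \<open>The scaled Sinkhorn operator\<close>

locale sinkhorn = mu: compact_prob_space \<mu> X + nu: compact_prob_space \<nu> Y
  for \<mu> :: "'a::{metric_space, second_countable_topology} measure" and X
    and \<nu> :: "'b::{metric_space, second_countable_topology} measure" and Y +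
  fixes c :: "'a \<times> 'b \<Rightarrow> real"
  assumes continuous_cost: "continuous_on (X \<times> Y) c"
begin

(* Sk is vk followed by vk for the swapped data (see Sk_eq_vk_vk), so each fact about vk
   is used twice: directly and through this interpretation. *)
lemma sinkhorn_swap: "sinkhorn \<nu> Y \<mu> X (c \<circ> prod.swap)"
proof unfold_locales
  show "continuous_on (Y \<times> X) (c \<circ> prod.swap)"
    by (intro continuous_on_compose continuous_on_swap)
       (auto intro: continuous_on_subset[OF continuous_cost])
qed

lemma cost_swap_swap: "c \<circ> prod.swap \<circ> prod.swap = c"
  by (simp add: fun_eq_iff)

definition cost_bound :: real where
  "cost_bound = (SUP p\<in>X \<times> Y. \<bar>c p\<bar>)"

lemma abs_cost_le_cost_bound:
  assumes "x \<in> X" "y \<in> Y"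
  shows "\<bar>c (x, y)\<bar> \<le> cost_bound"
proof -
  have "bounded (c ` (X \<times> Y))"
    by (intro compact_imp_bounded compact_continuous_image continuous_cost
        compact_Times mu.compact_support nu.compact_support)
  then obtain a where "\<And>p. p \<in> X \<times> Y \<Longrightarrow> \<bar>c p\<bar> \<le> a"
    by (auto simp: bounded_iff)
  then have "bdd_above ((\<lambda>p. \<bar>c p\<bar>) ` (X \<times> Y))"
    by (intro bdd_aboveI2[where M = a])
  then show ?thesis
    unfolding cost_bound_def using assms by (intro cSUP_upper) auto
qed

sublocale bounded_cost X Y c cost_bound
proof
  show "X \<noteq> {}" by (rule mu.support_nonempty)
  show "Y \<noteq> {}" by (rule nu.support_nonempty)
qed (rule abs_cost_le_cost_bound)

lemma continuous_on_cost_fst: "y \<in> Y \<Longrightarrow> continuous_on X (\<lambda>x. c (x, y))"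
  by (rule continuous_on_compose2[OF continuous_cost]) (auto intro!: continuous_intros)

lemma vk_eq_log_mean_exp: "vk k c \<mu> u y = log_mean_exp k \<mu> (\<lambda>x. - c (x, y) - u x)"
  unfolding vk_def log_mean_exp_def by (simp add: algebra_simps)

lemma Sk_eq_vk_vk: "Sk k c \<mu> \<nu> u = vk k (c \<circ> prod.swap) \<nu> (vk k c \<mu> u)"
  unfolding Sk_def vk_def by (simp add: fun_eq_iff)

lemma vk_c_Lipschitz:
  assumes k: "k > 0" and u: "continuous_on X u"
  shows "c_Lipschitz Y X (c \<circ> prod.swap) (vk k c \<mu> u)"
proof (rule c_LipschitzI)
  fix y y' e assume y: "y \<in> Y" "y' \<in> Y"
    and le: "\<And>x. x \<in> X \<Longrightarrow> (c \<circ> prod.swap) (y', x) \<le> (c \<circ> prod.swap) (y, x) + e"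
  have cf: "continuous_on X (\<lambda>x. - c (x, y) - u x)"
    by (intro continuous_intros continuous_on_cost_fst[OF y(1)] u)
  obtain B where f: "(\<lambda>x. - c (x, y) - u x) \<in> borel_measurable \<mu>"
      "\<And>x. x \<in> space \<mu> \<Longrightarrow> \<bar>- c (x, y) - u x\<bar> \<le> B"
    using mu.continuous_on_bounded_measurable[OF cf] by blast
  have cg: "continuous_on X (\<lambda>x. - c (x, y') - u x)"
    by (intro continuous_intros continuous_on_cost_fst[OF y(2)] u)
  obtain B' where g: "(\<lambda>x. - c (x, y') - u x) \<in> borel_measurable \<mu>"
      "\<And>x. x \<in> space \<mu> \<Longrightarrow> \<bar>- c (x, y') - u x\<bar> \<le> B'"
    using mu.continuous_on_bounded_measurable[OF cg] by blast
  show "vk k c \<mu> u y \<le> vk k c \<mu> u y' + e"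
    unfolding vk_eq_log_mean_exp
  proof (rule mu.log_mean_exp_le_plus[OF k f g])
    show "- c (x, y) - u x \<le> - c (x, y') - u x + e" if "x \<in> space \<mu>" for x
    proof -
      have "c (x, y') \<le> c (x, y) + e"
        using le[of x] that mu.space_eq by simp
      then show ?thesis by linarith
    qed
  qed
qed

lemma vk_continuous:
  assumes "k > 0" "continuous_on X u"
  shows "continuous_on Y (vk k c \<mu> u)"
  by (rule c_Lipschitz_continuous_on[OF nu.compact_support mu.compact_support
        sinkhorn.continuous_cost[OF sinkhorn_swap] vk_c_Lipschitz[OF assms]])

lemma Sk_c_Lipschitz:
  assumes "k > 0" "continuous_on X u"
  shows "c_Lipschitz X Y c (Sk k c \<mu> \<nu> u)"
  using sinkhorn.vk_c_Lipschitz[OF sinkhorn_swap \<open>k > 0\<close> vk_continuous[OF assms]]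
  by (simp add: Sk_eq_vk_vk cost_swap_swap)

lemma Sk_continuous:
  assumes "k > 0" "continuous_on X u"
  shows "continuous_on X (Sk k c \<mu> \<nu> u)"
  by (rule c_Lipschitz_continuous_on[OF mu.compact_support nu.compact_support
        continuous_cost Sk_c_Lipschitz[OF assms]])

lemma iterate_continuous:
  assumes "k > 0" "continuous_on X u"
  shows "continuous_on X ((Sk k c \<mu> \<nu> ^^ m) u)"
  by (induction m) (simp_all add: assms Sk_continuous)

lemma iterate_c_Lipschitz:
  assumes "k > 0" "continuous_on X u" "c_Lipschitz X Y c u"
  shows "c_Lipschitz X Y c ((Sk k c \<mu> \<nu> ^^ m) u)"
  by (cases m) (simp_all add: assms Sk_c_Lipschitz iterate_continuous)

lemma vk_le_ctrans:
  assumes k: "k > 0" and u: "continuous_on X u" and y: "y \<in> Y"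
  shows "vk k c \<mu> u y \<le> ctrans X c u y"
proof -
  have "continuous_on X (\<lambda>x. - c (x, y) - u x)"
    by (intro continuous_intros continuous_on_cost_fst[OF y] u)
  then obtain B where f: "(\<lambda>x. - c (x, y) - u x) \<in> borel_measurable \<mu>"
      "\<And>x. x \<in> space \<mu> \<Longrightarrow> \<bar>- c (x, y) - u x\<bar> \<le> B"
    using mu.continuous_on_bounded_measurable by blast
  have "- c (x, y) - u x \<le> ctrans X c u y" if "x \<in> X" for x
    unfolding ctrans_def
    using f(2) mu.space_eq that by (intro cSUP_upper bdd_above_if_abs_le[where B = B]) auto
  then show ?thesis
    unfolding vk_eq_log_mean_exp using f mu.space_eq by (intro mu.log_mean_exp_le[OF k f]) auto
qed

lemma Sk_le_ctrans':
  assumes "k > 0" "continuous_on X u" "x \<in> X"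
  shows "Sk k c \<mu> \<nu> u x \<le> ctrans' Y c (vk k c \<mu> u) x"
  using sinkhorn.vk_le_ctrans[OF sinkhorn_swap \<open>k > 0\<close> vk_continuous[OF assms(1,2)] \<open>x \<in> X\<close>]
  by (simp add: Sk_eq_vk_vk ctrans_swap)

lemma vk_ge_ctrans_minus:
  assumes charges: "uniformly_charges_balls \<mu> X" and e: "e > 0"
  obtains K where "K > 0"
    "\<And>k u y. K \<le> k \<Longrightarrow> continuous_on X u \<Longrightarrow> c_Lipschitz X Y c u \<Longrightarrow> y \<in> Y \<Longrightarrow>
       ctrans X c u y - e \<le> vk k c \<mu> u y"
proof -
  obtain d where d: "d > 0"
    "\<And>f x x'. c_Lipschitz X Y c f \<Longrightarrow> x \<in> X \<Longrightarrow> x' \<in> X \<Longrightarrow> dist x x' < d \<Longrightarrow> \<bar>f x - f x'\<bar> < e / 6"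
    using c_Lipschitz_uniformly_equicontinuous[OF mu.compact_support nu.compact_support
        continuous_cost, of "e / 6"] e by auto
  obtain K where K: "K > 0"
    "\<And>k f. K \<le> k \<Longrightarrow> continuous_on X f \<Longrightarrow>
       (\<And>x x'. x \<in> X \<Longrightarrow> x' \<in> X \<Longrightarrow> dist x x' < d \<Longrightarrow> f x \<le> f x' + e / 3) \<Longrightarrow>
       (SUP x\<in>X. f x) \<le> log_mean_exp k \<mu> f + 3 * (e / 3)"
    using mu.SUP_le_log_mean_exp_plus[OF charges d(1), of "e / 3"] e by auto
  show ?thesis
  proof (rule that[OF K(1)])
    fix k u y assume kK: "K \<le> k" and u: "continuous_on X u" "c_Lipschitz X Y c u" and y: "y \<in> Y"
    have cont: "continuous_on X (\<lambda>x. - c (x, y) - u x)"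
      by (intro continuous_intros continuous_on_cost_fst[OF y] u(1))
    have osc: "- c (x, y) - u x \<le> - c (x', y) - u x' + e / 3"
      if "x \<in> X" "x' \<in> X" "dist x x' < d" for x x'
      using d(2)[OF u(2) that] d(2)[OF c_Lipschitz_minus_cost[OF y] that]
      unfolding abs_less_iff by linarith
    show "ctrans X c u y - e \<le> vk k c \<mu> u y"
      using K(2)[OF kK cont osc] by (simp add: ctrans_def vk_eq_log_mean_exp)
  qed
qed

lemma Sk_ge_ctrans'_minus:
  assumes "uniformly_charges_balls \<nu> Y" "e > 0"
  obtains K where "K > 0"
    "\<And>k u x. K \<le> k \<Longrightarrow> continuous_on X u \<Longrightarrow> x \<in> X \<Longrightarrow>
       ctrans' Y c (vk k c \<mu> u) x - e \<le> Sk k c \<mu> \<nu> u x"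
proof -
  obtain K where K: "K > 0"
    "\<And>k v x. K \<le> k \<Longrightarrow> continuous_on Y v \<Longrightarrow> c_Lipschitz Y X (c \<circ> prod.swap) v \<Longrightarrow> x \<in> X \<Longrightarrow>
       ctrans Y (c \<circ> prod.swap) v x - e \<le> vk k (c \<circ> prod.swap) \<nu> v x"
    using sinkhorn.vk_ge_ctrans_minus[OF sinkhorn_swap assms] by blast
  show ?thesis
  proof (rule that[OF K(1)])
    fix k and u :: "'a \<Rightarrow> real" and x assume "K \<le> k" "continuous_on X u" "x \<in> X"
    moreover have "k > 0" using K(1) \<open>K \<le> k\<close> by linarith
    ultimately show "ctrans' Y c (vk k c \<mu> u) x - e \<le> Sk k c \<mu> \<nu> u x"
      using K(2)[of k "vk k c \<mu> u" x] vk_continuous vk_c_Lipschitz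
      by (simp add: Sk_eq_vk_vk ctrans_swap)
  qed
qed

lemma integral_integral_swap:
  fixes F :: "'a \<times> 'b \<Rightarrow> real"
  assumes F: "continuous_on (X \<times> Y) F"
  shows "(\<integral>x. (\<integral>y. F (x, y) \<partial>\<nu>) \<partial>\<mu>) = (\<integral>y. (\<integral>x. F (x, y) \<partial>\<mu>) \<partial>\<nu>)"
proof -
  interpret pair_prob_space \<mu> \<nu> by unfold_locales
  have "(\<lambda>p. (fst p, snd p)) \<in> measurable (\<mu> \<Otimes>\<^sub>M \<nu>) (borel \<Otimes>\<^sub>M borel)"
    by (intro measurable_Pair measurable_compose[OF measurable_fst mu.measurable_ident_borel]
        measurable_compose[OF measurable_snd nu.measurable_ident_borel])
  then have "(\<lambda>p. p) \<in> measurable (\<mu> \<Otimes>\<^sub>M \<nu>) borel"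
    by (simp add: borel_prod)
  then have "(\<lambda>p. p) \<in> measurable (\<mu> \<Otimes>\<^sub>M \<nu>) (restrict_space borel (X \<times> Y))"
    by (intro measurable_restrict_space2) (auto simp: space_pair_measure mu.space_eq nu.space_eq)
  then have "F \<in> borel_measurable (\<mu> \<Otimes>\<^sub>M \<nu>)"
    using measurable_comp[OF _ borel_measurable_continuous_on_restrict[OF F]] by (simp add: comp_def)
  moreover obtain B where "\<And>p. p \<in> X \<times> Y \<Longrightarrow> \<bar>F p\<bar> \<le> B"
    using compact_imp_bounded[OF compact_continuous_image[OF F compact_Times[OF mu.compact_support nu.compact_support]]]
    by (auto simp: bounded_iff)
  ultimately have "integrable (\<mu> \<Otimes>\<^sub>M \<nu>) (\<lambda>(x, y). F (x, y))"
    by (intro integrable_const_bound[where B = B]) (auto simp: space_pair_measure mu.space_eq nu.space_eq)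
  from Fubini_integral[OF this] show ?thesis
    by simp
qed

lemma exp_vk_minus:
  assumes k: "k > 0" and a: "continuous_on X a" and y: "y \<in> Y"
  shows "exp (k * (vk k c \<mu> a y - b)) = (\<integral>x. exp (k * (- c (x, y) - a x - b)) \<partial>\<mu>)"
proof -
  have "continuous_on X (\<lambda>x. - c (x, y) - a x)"
    by (intro continuous_intros continuous_on_cost_fst[OF y] a)
  then obtain B where f: "(\<lambda>x. - c (x, y) - a x) \<in> borel_measurable \<mu>"
      "\<And>x. x \<in> space \<mu> \<Longrightarrow> \<bar>- c (x, y) - a x\<bar> \<le> B"
    using mu.continuous_on_bounded_measurable by blast
  have "exp (k * (vk k c \<mu> a y - b)) = exp (- k * b) * exp (k * vk k c \<mu> a y)"
    by (simp add: algebra_simps flip: exp_add)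
  also have "\<dots> = (\<integral>x. exp (- k * b) * exp (k * (- c (x, y) - a x)) \<partial>\<mu>)"
    using mu.exp_log_mean_exp[OF k f] by (simp add: vk_eq_log_mean_exp)
  also have "\<dots> = (\<integral>x. exp (k * (- c (x, y) - a x - b)) \<partial>\<mu>)"
    by (intro Bochner_Integration.integral_cong refl) (simp add: algebra_simps flip: exp_add)
  finally show ?thesis .
qed

lemma integral_exp_vk_swap:
  assumes k: "k > 0" and a: "continuous_on X a" and b: "continuous_on Y b"
  shows "(\<integral>x. exp (k * (vk k (c \<circ> prod.swap) \<nu> b x - a x)) \<partial>\<mu>)
       = (\<integral>y. exp (k * (vk k c \<mu> a y - b y)) \<partial>\<nu>)"
proof -
  define F where "F p = exp (k * (- c p - a (fst p) - b (snd p)))" for p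
  have "continuous_on (X \<times> Y) F"
    unfolding F_def
    by (intro continuous_intros continuous_cost continuous_on_compose2[OF a]
        continuous_on_compose2[OF b]) auto
  have "(\<integral>x. exp (k * (vk k (c \<circ> prod.swap) \<nu> b x - a x)) \<partial>\<mu>) = (\<integral>x. (\<integral>y. F (x, y) \<partial>\<nu>) \<partial>\<mu>)"
  proof (intro Bochner_Integration.integral_cong refl)
    fix x assume "x \<in> space \<mu>"
    then have x: "x \<in> X" by (simp add: mu.space_eq)
    show "exp (k * (vk k (c \<circ> prod.swap) \<nu> b x - a x)) = (\<integral>y. F (x, y) \<partial>\<nu>)"
      unfolding sinkhorn.exp_vk_minus[OF sinkhorn_swap k b x] F_def
      by (intro Bochner_Integration.integral_cong refl) (simp add: algebra_simps)
  qed
  also have "\<dots> = (\<integral>y. (\<integral>x. F (x, y) \<partial>\<mu>) \<partial>\<nu>)"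
    by (rule integral_integral_swap[OF \<open>continuous_on (X \<times> Y) F\<close>])
  also have "\<dots> = (\<integral>y. exp (k * (vk k c \<mu> a y - b y)) \<partial>\<nu>)"
  proof (intro Bochner_Integration.integral_cong refl)
    fix y assume "y \<in> space \<nu>"
    then have y: "y \<in> Y" by (simp add: nu.space_eq)
    show "(\<integral>x. F (x, y) \<partial>\<mu>) = exp (k * (vk k c \<mu> a y - b y))"
      unfolding exp_vk_minus[OF k a y] F_def
      by (intro Bochner_Integration.integral_cong refl) (simp add: algebra_simps)
  qed
  finally show ?thesis .
qed

(* Fubini shows that exp (k (u - a)), with u the integrand on the left, has mean 1;
   Jensen's inequality then gives a nonpositive mean to u - a. *)
lemma integral_vk_vk_le:
  assumes k: "k > 0" and a: "continuous_on X a"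
  shows "(\<integral>x. vk k (c \<circ> prod.swap) \<nu> (vk k c \<mu> a) x \<partial>\<mu>) \<le> (\<integral>x. a x \<partial>\<mu>)"
proof -
  let ?v = "vk k c \<mu> a"
  let ?u = "vk k (c \<circ> prod.swap) \<nu> ?v"
  have v: "continuous_on Y ?v"
    by (rule vk_continuous[OF k a])
  have u: "continuous_on X ?u"
    by (rule sinkhorn.vk_continuous[OF sinkhorn_swap k v])
  have "(\<integral>x. exp (k * (?u x - a x)) \<partial>\<mu>) = (\<integral>y. exp (k * (?v y - ?v y)) \<partial>\<nu>)"
    by (rule integral_exp_vk_swap[OF k a v])
  also have "\<dots> = 1"
    by (simp add: nu.prob_space)
  finally have one: "(\<integral>x. exp (k * (?u x - a x)) \<partial>\<mu>) = 1" .
  have "continuous_on X (\<lambda>x. k * (?u x - a x))"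
    by (intro continuous_intros u a)
  then obtain B where f: "(\<lambda>x. k * (?u x - a x)) \<in> borel_measurable \<mu>"
      "\<And>x. x \<in> space \<mu> \<Longrightarrow> \<bar>k * (?u x - a x)\<bar> \<le> B"
    using mu.continuous_on_bounded_measurable by blast
  have "exp (\<integral>x. k * (?u x - a x) \<partial>\<mu>) \<le> 1"
    using mu.exp_integral_le_integral_exp[OF f] one by simp
  moreover have "(\<integral>x. k * (?u x - a x) \<partial>\<mu>) = k * ((\<integral>x. ?u x \<partial>\<mu>) - (\<integral>x. a x \<partial>\<mu>))"
    using mu.integrable_continuous_on[OF u] mu.integrable_continuous_on[OF a] by simp
  ultimately show ?thesis
    using k by (simp add: mult_le_0_iff)
qed

lemma integral_Sk_le:
  assumes "k > 0" "continuous_on X u"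
  shows "(\<integral>x. Sk k c \<mu> \<nu> u x \<partial>\<mu>) \<le> (\<integral>x. u x \<partial>\<mu>)"
  using integral_vk_vk_le[OF assms] by (simp add: Sk_eq_vk_vk)

lemma integral_vk_Sk_le:
  assumes "k > 0" "continuous_on X u"
  shows "(\<integral>y. vk k c \<mu> (Sk k c \<mu> \<nu> u) y \<partial>\<nu>) \<le> (\<integral>y. vk k c \<mu> u y \<partial>\<nu>)"
  using sinkhorn.integral_vk_vk_le[OF sinkhorn_swap \<open>k > 0\<close> vk_continuous[OF assms]]
  by (simp add: Sk_eq_vk_vk cost_swap_swap)

lemma integral_vk_ge:
  assumes k: "k > 0" and u: "continuous_on X u"
  shows "- cost_bound - (\<integral>x. u x \<partial>\<mu>) \<le> (\<integral>y. vk k c \<mu> u y \<partial>\<nu>)"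
proof (rule nu.integral_ge_const)
  show "integrable \<nu> (vk k c \<mu> u)"
    by (rule nu.integrable_continuous_on[OF vk_continuous[OF k u]])
  have "- cost_bound - (\<integral>x. u x \<partial>\<mu>) \<le> vk k c \<mu> u y" if y: "y \<in> Y" for y
  proof -
    have cf: "continuous_on X (\<lambda>x. - c (x, y) - u x)"
      by (intro continuous_intros continuous_on_cost_fst[OF y] u)
    then obtain B where f: "(\<lambda>x. - c (x, y) - u x) \<in> borel_measurable \<mu>"
        "\<And>x. x \<in> space \<mu> \<Longrightarrow> \<bar>- c (x, y) - u x\<bar> \<le> B"
      using mu.continuous_on_bounded_measurable by blast
    have "- cost_bound - (\<integral>x. u x \<partial>\<mu>) = (\<integral>x. - cost_bound - u x \<partial>\<mu>)"
      using mu.integrable_continuous_on[OF u] by (simp add: mu.prob_space)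
    also have "\<dots> \<le> (\<integral>x. - c (x, y) - u x \<partial>\<mu>)"
      using cost_abs_le[OF _ y] mu.integrable_continuous_on[OF u] mu.integrable_continuous_on[OF cf]
      by (intro integral_mono) (auto simp: mu.space_eq abs_le_iff)
    also have "\<dots> \<le> vk k c \<mu> u y"
      unfolding vk_eq_log_mean_exp by (rule mu.integral_le_log_mean_exp[OF k f])
    finally show ?thesis .
  qed
  then show "AE y in \<nu>. - cost_bound - (\<integral>x. u x \<partial>\<mu>) \<le> vk k c \<mu> u y"
    by (intro AE_I2) (simp add: nu.space_eq)
qed

lemma abs_diff_integral_le_if_c_Lipschitz:
  assumes f: "continuous_on X f" "c_Lipschitz X Y c f" and x: "x \<in> X"
  shows "\<bar>f x - (\<integral>x. f x \<partial>\<mu>)\<bar> \<le> 2 * cost_bound"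
proof -
  have "f x - 2 * cost_bound \<le> f x'" "f x' \<le> f x + 2 * cost_bound" if "x' \<in> space \<mu>" for x'
    using c_Lipschitz_le_plus[OF f(2)] x that mu.space_eq by fastforce+
  then have "f x - 2 * cost_bound \<le> (\<integral>x. f x \<partial>\<mu>)" "(\<integral>x. f x \<partial>\<mu>) \<le> f x + 2 * cost_bound"
    using mu.integrable_continuous_on[OF f(1)]
    by (auto intro!: mu.integral_ge_const mu.integral_le_const AE_I2)
  then show ?thesis by (simp add: abs_le_iff)
qed

lemma iterate_abs_le:
  assumes k: "k > 0" and u: "continuous_on X u" "c_Lipschitz X Y c u"
    and B: "\<And>x. x \<in> X \<Longrightarrow> \<bar>u x\<bar> \<le> B" and x: "x \<in> X"
  shows "\<bar>(Sk k c \<mu> \<nu> ^^ m) u x\<bar> \<le> B + 4 * cost_bound"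
proof -
  define U where "U m = (Sk k c \<mu> \<nu> ^^ m) u" for m
  have U: "continuous_on X (U m)" "c_Lipschitz X Y c (U m)" for m
    unfolding U_def using iterate_continuous[OF k u(1)] iterate_c_Lipschitz[OF k u] by auto
  define I where "I m = (\<integral>x. U m x \<partial>\<mu>)" for m
  define J where "J m = (\<integral>y. vk k c \<mu> (U m) y \<partial>\<nu>)" for m
  have I_decreasing: "I n \<le> I 0" for n
  proof (induction n)
    case (Suc n)
    then show ?case using integral_Sk_le[OF k U(1)[of n]] by (simp add: I_def U_def)
  qed simp
  have J_decreasing: "J n \<le> J 0" for n
  proof (induction n)
    case (Suc n)
    then show ?case using integral_vk_Sk_le[OF k U(1)[of n]] by (simp add: J_def U_def)
  qed simp
  have I_0: "I 0 \<le> B"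
    unfolding I_def U_def using B mu.integrable_continuous_on[OF u(1)]
    by (intro mu.integral_le_const) (auto simp: mu.space_eq abs_le_iff)
  have J_0: "J 0 \<le> cost_bound + B"
  proof -
    have "vk k c \<mu> u y \<le> cost_bound + B" if "y \<in> Y" for y
      using vk_le_ctrans[OF k u(1) that] ctrans_abs_le[of u B, OF B that] by simp
    then show ?thesis
      unfolding J_def U_def using nu.integrable_continuous_on[OF vk_continuous[OF k u(1)]]
      by (intro nu.integral_le_const) (auto simp: nu.space_eq)
  qed
  have I_J: "- cost_bound - I m \<le> J m"
    unfolding I_def J_def by (rule integral_vk_ge[OF k U(1)])
  have U_I: "\<bar>U m x - I m\<bar> \<le> 2 * cost_bound"
    unfolding I_def by (rule abs_diff_integral_le_if_c_Lipschitz[OF U x])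
  show ?thesis
    using I_decreasing[of m] J_decreasing[of m] I_0 J_0 I_J U_I
    unfolding U_def[symmetric] abs_le_iff by linarith
qed

end

section \<open>Limits of the Sinkhorn iteration\<close>

lemma LIMSEQ_nat_floor_mult_div:
  assumes "t \<ge> 0"
  shows "(\<lambda>n. real (nat \<lfloor>t * real (Suc n)\<rfloor>) / real (Suc n)) \<longlonglongrightarrow> t"
proof (rule tendsto_sandwich[where f = "\<lambda>n. t - inverse (real (Suc n))" and h = "\<lambda>n. t"])
  have "t - inverse (real (Suc n)) \<le> real (nat \<lfloor>t * real (Suc n)\<rfloor>) / real (Suc n)
        \<and> real (nat \<lfloor>t * real (Suc n)\<rfloor>) / real (Suc n) \<le> t" for n
  proof -
    define q where "q = real (Suc n)"
    define l where "l = real (nat \<lfloor>t * q\<rfloor>)"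
    have q: "q > 0" by (simp add: q_def)
    have l: "t * q - 1 \<le> l" "l \<le> t * q"
      using assms q of_int_floor_le[of "t * q"] real_of_int_floor_gt_diff_one[of "t * q"]
      by (simp_all add: l_def)
    have "t - inverse q = (t * q - 1) / q"
      using q by (simp add: field_simps)
    also have "\<dots> \<le> l / q"
      using l(1) q by (intro divide_right_mono) auto
    finally have "t - inverse q \<le> l / q" .
    moreover have "l / q \<le> t"
      using l(2) q by (simp add: pos_divide_le_eq)
    ultimately show ?thesis
      unfolding q_def l_def by blast
  qed
  then show "\<forall>\<^sub>F n in sequentially. t - inverse (real (Suc n)) \<le> real (nat \<lfloor>t * real (Suc n)\<rfloor>) / real (Suc n)"
    "\<forall>\<^sub>F n in sequentially. real (nat \<lfloor>t * real (Suc n)\<rfloor>) / real (Suc n) \<le> t"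
    by simp_all
  show "(\<lambda>n. t - inverse (real (Suc n))) \<longlonglongrightarrow> t"
    using tendsto_diff[OF tendsto_const LIMSEQ_inverse_real_of_nat, of t] by simp
qed simp

lemma uniform_limit_abs_le:
  fixes f :: "'i \<Rightarrow> 'a \<Rightarrow> real"
  assumes "uniform_limit S f w F" "F \<noteq> bot" "\<forall>\<^sub>F j in F. \<forall>x\<in>S. \<bar>f j x\<bar> \<le> C" "x \<in> S"
  shows "\<bar>w x\<bar> \<le> C"
  using assms by (intro tendsto_upperbound[OF tendsto_rabs[OF tendsto_uniform_limitI]])
    (auto elim: eventually_mono)

locale sinkhorn_iteration = sinkhorn \<mu> X \<nu> Y c
  for \<mu> :: "'a::euclidean_space measure" and X and \<nu> :: "'b::euclidean_space measure" and Y and c +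
  fixes u0 :: "'a \<Rightarrow> real"
  assumes c_convex_u0: "c_convex X Y c u0"
    and charges_nu: "uniformly_charges_balls \<nu> Y"
begin

lemma continuous_on_u0: "continuous_on X u0"
  by (rule c_Lipschitz_continuous_on[OF mu.compact_support nu.compact_support continuous_cost
        c_convex_c_Lipschitz[OF c_convex_u0]])

lemma iterates_bounded:
  obtains C where "\<And>k m x. k > 0 \<Longrightarrow> x \<in> X \<Longrightarrow> \<bar>(Sk k c \<mu> \<nu> ^^ m) u0 x\<bar> \<le> C"
proof -
  obtain B where "\<And>x. x \<in> X \<Longrightarrow> \<bar>u0 x\<bar> \<le> B"
    using c_convex_bounded[OF c_convex_u0] by blast
  then show ?thesis
    using that iterate_abs_le[OF _ continuous_on_u0 c_convex_c_Lipschitz[OF c_convex_u0]] by blast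
qed

lemma iterates_uniformly_equicontinuous:
  assumes "e > 0"
  obtains d where "d > 0"
    "\<And>k m x x'. k > 0 \<Longrightarrow> x \<in> X \<Longrightarrow> x' \<in> X \<Longrightarrow> dist x x' < d \<Longrightarrow>
       \<bar>(Sk k c \<mu> \<nu> ^^ m) u0 x - (Sk k c \<mu> \<nu> ^^ m) u0 x'\<bar> < e"
proof -
  obtain d where d: "d > 0"
    "\<And>f x x'. c_Lipschitz X Y c f \<Longrightarrow> x \<in> X \<Longrightarrow> x' \<in> X \<Longrightarrow> dist x x' < d \<Longrightarrow> \<bar>f x - f x'\<bar> < e"
    using c_Lipschitz_uniformly_equicontinuous[OF mu.compact_support nu.compact_support
        continuous_cost assms] by blast
  show ?thesis
    using that[OF d(1)] d(2)[OF iterate_c_Lipschitz[OF _ continuous_on_u0 c_convex_c_Lipschitz[OF c_convex_u0]]]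
    by blast
qed

lemma iterates_near_c_convex:
  assumes "\<eta> > 0"
  obtains K where "K > 0"
    "\<And>k m. K \<le> k \<Longrightarrow> \<exists>g. c_convex X Y c g \<and> (\<forall>x\<in>X. \<bar>(Sk k c \<mu> \<nu> ^^ m) u0 x - g x\<bar> \<le> \<eta>)"
proof -
  obtain K where K: "K > 0"
    "\<And>k u x. K \<le> k \<Longrightarrow> continuous_on X u \<Longrightarrow> x \<in> X \<Longrightarrow>
       ctrans' Y c (vk k c \<mu> u) x - \<eta> \<le> Sk k c \<mu> \<nu> u x"
    using Sk_ge_ctrans'_minus[OF charges_nu assms] by blast
  show ?thesis
  proof (rule that[OF K(1)])
    fix k m assume "K \<le> k"
    then have k: "k > 0" using K(1) by linarith
    show "\<exists>g. c_convex X Y c g \<and> (\<forall>x\<in>X. \<bar>(Sk k c \<mu> \<nu> ^^ m) u0 x - g x\<bar> \<le> \<eta>)"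
    proof (cases m)
      case 0
      then show ?thesis using c_convex_u0 assms by auto
    next
      case (Suc n)
      define u where "u = (Sk k c \<mu> \<nu> ^^ n) u0"
      have u: "continuous_on X u"
        unfolding u_def by (rule iterate_continuous[OF k continuous_on_u0])
      obtain B where "y \<in> Y \<Longrightarrow> \<bar>vk k c \<mu> u y\<bar> \<le> B" for y
        using nu.continuous_on_bounded_measurable[OF vk_continuous[OF k u]] nu.space_eq by blast
      then have "c_convex X Y c (ctrans' Y c (vk k c \<mu> u))"
        by (rule c_convex_ctrans')
      moreover have "\<bar>Sk k c \<mu> \<nu> u x - ctrans' Y c (vk k c \<mu> u) x\<bar> \<le> \<eta>" if "x \<in> X" for x
        using Sk_le_ctrans'[OF k u that] K(2)[OF \<open>K \<le> k\<close> u that] by (simp add: abs_le_iff)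
      moreover have "(Sk k c \<mu> \<nu> ^^ m) u0 = Sk k c \<mu> \<nu> u"
        unfolding Suc u_def by simp
      ultimately show ?thesis
        by auto
    qed
  qed
qed

lemma Lset_abs_le:
  obtains C where "\<And>t w x. w \<in> Lset X c \<mu> \<nu> u0 t \<Longrightarrow> x \<in> X \<Longrightarrow> \<bar>w x\<bar> \<le> C"
proof -
  obtain C where C: "\<And>k m x. k > 0 \<Longrightarrow> x \<in> X \<Longrightarrow> \<bar>(Sk k c \<mu> \<nu> ^^ m) u0 x\<bar> \<le> C"
    using iterates_bounded by blast
  have "\<bar>w x\<bar> \<le> C" if "w \<in> Lset X c \<mu> \<nu> u0 t" "x \<in> X" for t w x
  proof -
    obtain k m where k: "filterlim k at_top sequentially"
      and w: "uniform_limit X (\<lambda>j. (Sk (k j) c \<mu> \<nu> ^^ m j) u0) w sequentially"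
      using \<open>w \<in> Lset X c \<mu> \<nu> u0 t\<close> unfolding Lset_def by blast
    have "\<forall>\<^sub>F j in sequentially. k j > 0"
      using k by (simp add: filterlim_at_top_dense)
    then show ?thesis
      using C by (intro uniform_limit_abs_le[OF w _ _ \<open>x \<in> X\<close>]) (auto elim: eventually_mono)
  qed
  then show ?thesis using that by blast
qed

lemma c_convex_if_in_Lset:
  assumes "w \<in> Lset X c \<mu> \<nu> u0 t"
  shows "c_convex X Y c w"
proof (rule c_convex_uniform_approx)
  fix \<eta> :: real assume "\<eta> > 0"
  obtain k m where k: "filterlim k at_top sequentially"
    and w: "uniform_limit X (\<lambda>j. (Sk (k j) c \<mu> \<nu> ^^ m j) u0) w sequentially"
    using assms unfolding Lset_def by blast
  obtain K where K: "K > 0"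
    "\<And>k m. K \<le> k \<Longrightarrow> \<exists>g. c_convex X Y c g \<and> (\<forall>x\<in>X. \<bar>(Sk k c \<mu> \<nu> ^^ m) u0 x - g x\<bar> \<le> \<eta> / 2)"
    using iterates_near_c_convex[of "\<eta> / 2"] \<open>\<eta> > 0\<close> by auto
  have "\<forall>\<^sub>F j in sequentially. K \<le> k j \<and> (\<forall>x\<in>X. dist ((Sk (k j) c \<mu> \<nu> ^^ m j) u0 x) (w x) < \<eta> / 2)"
    using k uniform_limitD[OF w, of "\<eta> / 2"] \<open>\<eta> > 0\<close>
    by (auto simp: filterlim_at_top intro: eventually_conj)
  then obtain j where "K \<le> k j \<and> (\<forall>x\<in>X. dist ((Sk (k j) c \<mu> \<nu> ^^ m j) u0 x) (w x) < \<eta> / 2)"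
    unfolding eventually_sequentially by blast
  then have j: "K \<le> k j" "\<And>x. x \<in> X \<Longrightarrow> dist ((Sk (k j) c \<mu> \<nu> ^^ m j) u0 x) (w x) < \<eta> / 2"
    by auto
  obtain g where g: "c_convex X Y c g" "\<And>x. x \<in> X \<Longrightarrow> \<bar>(Sk (k j) c \<mu> \<nu> ^^ m j) u0 x - g x\<bar> \<le> \<eta> / 2"
    using K(2)[OF j(1)] by blast
  have "\<bar>w x - g x\<bar> \<le> \<eta>" if "x \<in> X" for x
    using j(2)[OF that] g(2)[OF that] unfolding dist_real_def abs_le_iff abs_less_iff by linarith
  then show "\<exists>g. c_convex X Y c g \<and> (\<forall>x\<in>X. \<bar>w x - g x\<bar> \<le> \<eta>)"
    using g(1) by blast
qed

lemma Lset_nonempty: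
  assumes "t \<ge> 0"
  shows "Lset X c \<mu> \<nu> u0 t \<noteq> {}"
proof -
  define k :: "nat \<Rightarrow> real" where "k n = real (Suc n)" for n
  define m where "m n = nat \<lfloor>t * k n\<rfloor>" for n
  define F where "F n = (Sk (k n) c \<mu> \<nu> ^^ m n) u0" for n
  have k: "k n > 0" for n
    unfolding k_def by simp
  obtain C where "\<And>k m x. k > 0 \<Longrightarrow> x \<in> X \<Longrightarrow> \<bar>(Sk k c \<mu> \<nu> ^^ m) u0 x\<bar> \<le> C"
    using iterates_bounded by blast
  then have C: "\<And>n x. x \<in> X \<Longrightarrow> norm (F n x) \<le> C"
    unfolding F_def using k by simp
  have equicont: "\<exists>d>0. \<forall>n x'. x' \<in> X \<and> norm (x - x') < d \<longrightarrow> norm (F n x - F n x') < e"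
    if "x \<in> X" "e > 0" for x e
  proof -
    obtain d where d: "d > 0"
      "\<And>k m x x'. k > 0 \<Longrightarrow> x \<in> X \<Longrightarrow> x' \<in> X \<Longrightarrow> dist x x' < d \<Longrightarrow>
         \<bar>(Sk k c \<mu> \<nu> ^^ m) u0 x - (Sk k c \<mu> \<nu> ^^ m) u0 x'\<bar> < e"
      using iterates_uniformly_equicontinuous[OF \<open>e > 0\<close>] by blast
    show ?thesis
      unfolding F_def using d(1) d(2)[OF k \<open>x \<in> X\<close>] by (auto simp: dist_norm)
  qed
  obtain g and r :: "nat \<Rightarrow> nat" where g: "continuous_on X g" "strict_mono r"
      "\<And>e. 0 < e \<Longrightarrow> \<exists>N. \<forall>n x. n \<ge> N \<and> x \<in> X \<longrightarrow> norm (F (r n) x - g x) < e"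
    using Arzela_Ascoli[of X F C, OF mu.compact_support C equicont] by blast
  have "filterlim (\<lambda>j. k (r j)) at_top sequentially"
    using filterlim_compose[OF filterlim_real_sequentially filterlim_subseq[OF g(2)]]
      filterlim_Suc by (auto simp: k_def filterlim_at_top_mono)
  moreover have "(\<lambda>j. real (m (r j)) / k (r j)) \<longlonglongrightarrow> t"
    using LIMSEQ_subseq_LIMSEQ[OF LIMSEQ_nat_floor_mult_div[OF assms] g(2)]
    by (simp add: m_def k_def comp_def)
  moreover have "uniform_limit X (\<lambda>j. F (r j)) g sequentially"
    unfolding uniform_limit_sequentially_iff
  proof (intro allI impI)
    fix e :: real assume "e > 0"
    then obtain N where "\<forall>n x. N \<le> n \<and> x \<in> X \<longrightarrow> norm (F (r n) x - g x) < e"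
      using g(3) by blast
    then show "\<exists>N. \<forall>n\<ge>N. \<forall>x\<in>X. dist (F (r n) x) (g x) < e"
      by (auto simp: dist_norm)
  qed
  ultimately have "g \<in> Lset X c \<mu> \<nu> u0 t"
    unfolding Lset_def F_def using g(1)
    by (intro CollectI conjI exI[of _ "\<lambda>j. k (r j)"] exI[of _ "\<lambda>j. m (r j)"])
  then show ?thesis by blast
qed

lemma u_lim_c_convex_bounded:
  obtains C where "\<And>t. t \<ge> 0 \<Longrightarrow> c_convex X Y c (u_lim X c \<mu> \<nu> u0 t)"
    "\<And>t x. t \<ge> 0 \<Longrightarrow> x \<in> X \<Longrightarrow> \<bar>u_lim X c \<mu> \<nu> u0 t x\<bar> \<le> C"
proof -
  obtain C where C: "\<And>t w x. w \<in> Lset X c \<mu> \<nu> u0 t \<Longrightarrow> x \<in> X \<Longrightarrow> \<bar>w x\<bar> \<le> C"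
    using Lset_abs_le by blast
  show ?thesis
  proof (rule that)
    fix t :: real assume "t \<ge> 0"
    then show "c_convex X Y c (u_lim X c \<mu> \<nu> u0 t)"
      unfolding u_lim_def using C c_convex_if_in_Lset
      by (intro c_convex_SUP[OF Lset_nonempty]) auto
    fix x assume "x \<in> X"
    then show "\<bar>u_lim X c \<mu> \<nu> u0 t x\<bar> \<le> C"
      unfolding u_lim_def using C by (intro cSUP_abs_le[OF Lset_nonempty[OF \<open>t \<ge> 0\<close>]])
  qed
qed

end

theorem proposition6p1:
  fixes X :: "'a::euclidean_space set" and Y :: "'b::euclidean_space set"
    and \<mu> :: "'a measure" and \<nu> :: "'b measure"
    and c :: "'a \<times> 'b \<Rightarrow> real" and u0 :: "'a \<Rightarrow> real"
  assumes "compact X" and "smooth_manifold TYPE('n::finite) X"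
    and "compact Y" and "smooth_manifold TYPE('n) Y"
    and "prob_space \<mu>" and "volume_form TYPE('n) X \<mu>"
    and "prob_space \<nu>" and "volume_form TYPE('n) Y \<nu>"
    and "continuous_on (X \<times> Y) c"
    and "closed (sing TYPE('n) X Y c)"
    and "cond_A1 TYPE('n) X Y c" and "cond_A2 TYPE('n) X Y c"
    and "c_convex X Y c u0"
  shows "(\<forall>t\<ge>0. c_convex X Y c (u_lim X c \<mu> \<nu> u0 t)) \<and>
         (\<exists>C. \<forall>t\<ge>0. \<forall>x\<in>X. \<bar>u_lim X c \<mu> \<nu> u0 t x\<bar> \<le> C)"
proof -
  interpret mu: compact_prob_space \<mu> X
    using assms(1,5,6) by (simp add: compact_prob_space_def compact_prob_space_axioms_def volume_form_def)
  interpret nu: compact_prob_space \<nu> Y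
    using assms(3,7,8) by (simp add: compact_prob_space_def compact_prob_space_axioms_def volume_form_def)
  have "uniformly_charges_balls \<nu> Y"
    by (rule nu.uniformly_charges_balls_if_balls_pos[OF volume_form_ball_pos[OF assms(4,8)]])
  then interpret sinkhorn_iteration \<mu> X \<nu> Y c u0
    using assms(9,13) by unfold_locales
  obtain C where "\<And>t. t \<ge> 0 \<Longrightarrow> c_convex X Y c (u_lim X c \<mu> \<nu> u0 t)"
    "\<And>t x. t \<ge> 0 \<Longrightarrow> x \<in> X \<Longrightarrow> \<bar>u_lim X c \<mu> \<nu> u0 t x\<bar> \<le> C"
    using u_lim_c_convex_bounded by blast
  then show ?thesis
    by blast
qed

end
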